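(* Let $\mathbb{K}=(K,+,\times,0,1)$ be a semiring and let $A_1$ and $A_2$ be two RWTAs over the graded alphabet $\Sigma$ with weights in $K$. Then for every tree $t\in T_\Sigma$, $\mathbb{P}_{A_1\times A_2}(t)=\mathbb{P}_{A_1}(t)\times\mathbb{P}_{A_2}(t)$.
   Context: A graded alphabet is a finite set $\Sigma=\bigcup_{k\in\mathbb{N}}\Sigma_k$; $T_\Sigma$ is the set of trees $f(t_1,\ldots,t_k)$ with $f\in\Sigma_k$. A semiring $(K,+,\times,0,1)$: $(K,+)$ commutative monoid with identity $0$, $(K,\times)$ monoid with identity $1$, $0$ absorbing, $\times$ distributes over $+$. A RWTA with weights in $K$ is $A=(\Sigma,Q,\nu,\delta)$ with $Q$ finite, $\nu:Q\to K$, $\delta\subseteq\bigcup_k Q\times\Sigma_k\times Q^k$. Write $\delta(f,q_1,\ldots,q_k)=\{q\mid(q,f,q_1,\ldots,q_k)\in\delta\}$, extended to subsets by union over tuples; $\nu(S)=\sum_{s\in S}\nu(s)$ ($\nu(\emptyset)=0$); $\Delta(f(t_1,\ldots,t_k))=\delta(f,\Delta(t_1),\ldots,\Delta(t_k))$; $\mathbb{P}_A(t)=\nu(\Delta(t))$. For $A_i=(\Sigma,Q_i,\nu_i,\delta_i)$, the product $A_1\times A_2$ is the RWTA with states $Q_1\times Q_2$, transitions $\delta'(f,(q_{1_1},q_{2_1}),\ldots,(q_{1_k},q_{2_k}))=\delta_1(f,q_{1_1},\ldots,q_{1_k})\times\delta_2(f,q_{2_1},\ldots,q_{2_k})$, and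 root weights $\nu'((q_1,q_2))=\nu_1(q_1)\times\nu_2(q_2)$. *)

theory Defs
  imports Main
begin

(* Ranked trees over a graded alphabet; the grading is given by an arity function ar. *)
datatype 'f tree = Node 'f "'f tree list"

fun wf_tree :: "'f set \<Rightarrow> ('f \<Rightarrow> nat) \<Rightarrow> 'f tree \<Rightarrow> bool" where
  "wf_tree Sig ar (Node f ts) \<longleftrightarrow> f \<in> Sig \<and> length ts = ar f \<and> (\<forall>t\<in>set ts. wf_tree Sig ar t)"

record ('f, 'q, 'k) rwta =
  states :: "'q set"
  nu :: "'q \<Rightarrow> 'k"
  delta :: "('q \<times> 'f \<times> 'q list) set"

definition is_rwta :: "'f set \<Rightarrow> ('f \<Rightarrow> nat) \<Rightarrow> ('f, 'q, 'k) rwta \<Rightarrow> bool" where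
  "is_rwta Sig ar A \<longleftrightarrow> finite Sig \<and> finite (states A) \<and>
     delta A \<subseteq> {(q, f, qs). q \<in> states A \<and> f \<in> Sig \<and> length qs = ar f \<and> set qs \<subseteq> states A}"

definition delta_set :: "('q \<times> 'f \<times> 'q list) set \<Rightarrow> 'f \<Rightarrow> 'q set list \<Rightarrow> 'q set" where
  "delta_set d f Ss = {q. \<exists>qs. list_all2 (\<in>) qs Ss \<and> (q, f, qs) \<in> d}"

fun Delta :: "('f, 'q, 'k) rwta \<Rightarrow> 'f tree \<Rightarrow> 'q set" where
  "Delta A (Node f ts) = delta_set (delta A) f (map (Delta A) ts)"

definition prob :: "('f, 'q, 'k::comm_monoid_add) rwta \<Rightarrow> 'f tree \<Rightarrow> 'k" where
  "prob A t = (\<Sum>q\<in>Delta A t. nu A q)"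

definition rwta_prod :: "('f, 'q1, 'k::times) rwta \<Rightarrow> ('f, 'q2, 'k) rwta \<Rightarrow> ('f, 'q1 \<times> 'q2, 'k) rwta" where
  "rwta_prod A1 A2 =
     \<lparr> states = states A1 \<times> states A2,
       nu = (\<lambda>(q1, q2). nu A1 q1 * nu A2 q2),
       delta = {((q1, q2), f, ps). (q1, f, map fst ps) \<in> delta A1 \<and> (q2, f, map snd ps) \<in> delta A2} \<rparr>"

end

theory Submission
  imports Defs
begin

text \<open>By induction on the tree, the run of the product automaton reaches exactly the pairs of
states reached by the two factors, since a tuple of state pairs is the same as a pair of state
tuples. The weight of a product set of states then factors by distributivity.\<close>

lemma list_all2_in_map2_Times:
  assumes "length Ss = length Ts"
  shows "list_all2 (\<in>) ps (map2 (\<times>) Ss Ts) \<longleftrightarrow>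
    list_all2 (\<in>) (map fst ps) Ss \<and> list_all2 (\<in>) (map snd ps) Ts"
  using assms
proof (induction Ss Ts arbitrary: ps rule: list_induct2)
  case Nil
  then show ?case by (cases ps) auto
next
  case (Cons S Ss T Ts)
  then show ?case by (cases ps) (auto simp: mem_Times_iff)
qed

lemma delta_set_rwta_prod:
  assumes "length Ss = length Ts"
  shows "delta_set (delta (rwta_prod A1 A2)) f (map2 (\<times>) Ss Ts) =
    delta_set (delta A1) f Ss \<times> delta_set (delta A2) f Ts"
proof (rule set_eqI, clarify)
  fix q1 q2
  show "(q1, q2) \<in> delta_set (delta (rwta_prod A1 A2)) f (map2 (\<times>) Ss Ts) \<longleftrightarrow>
    (q1, q2) \<in> delta_set (delta A1) f Ss \<times> delta_set (delta A2) f Ts"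
  proof
    assume "(q1, q2) \<in> delta_set (delta (rwta_prod A1 A2)) f (map2 (\<times>) Ss Ts)"
    then obtain ps where "list_all2 (\<in>) ps (map2 (\<times>) Ss Ts)"
      and "(q1, f, map fst ps) \<in> delta A1" and "(q2, f, map snd ps) \<in> delta A2"
      by (auto simp: delta_set_def rwta_prod_def)
    then show "(q1, q2) \<in> delta_set (delta A1) f Ss \<times> delta_set (delta A2) f Ts"
      using list_all2_in_map2_Times[OF assms] by (auto simp: delta_set_def)
  next
    assume "(q1, q2) \<in> delta_set (delta A1) f Ss \<times> delta_set (delta A2) f Ts"
    then obtain qs1 qs2 where qs1: "list_all2 (\<in>) qs1 Ss" "(q1, f, qs1) \<in> delta A1"
      and qs2: "list_all2 (\<in>) qs2 Ts" "(q2, f, qs2) \<in> delta A2"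
      by (auto simp: delta_set_def)
    have "length qs1 = length qs2"
      using qs1(1) qs2(1) assms by (simp add: list_all2_lengthD)
    then have "list_all2 (\<in>) (zip qs1 qs2) (map2 (\<times>) Ss Ts)"
      using qs1(1) qs2(1) list_all2_in_map2_Times[OF assms] by simp
    with qs1(2) qs2(2) \<open>length qs1 = length qs2\<close>
    show "(q1, q2) \<in> delta_set (delta (rwta_prod A1 A2)) f (map2 (\<times>) Ss Ts)"
      unfolding delta_set_def rwta_prod_def by (auto intro!: exI[of _ "zip qs1 qs2"])
  qed
qed

lemma Delta_rwta_prod: "Delta (rwta_prod A1 A2) t = Delta A1 t \<times> Delta A2 t"
proof (induction t)
  case (Node f ts)
  then have "map (Delta (rwta_prod A1 A2)) ts = map2 (\<times>) (map (Delta A1) ts) (map (Delta A2) ts)"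
    by (simp add: map2_map_map)
  then show ?case
    by (simp add: delta_set_rwta_prod)
qed

lemma Delta_subset_states: "is_rwta Sig ar A \<Longrightarrow> Delta A t \<subseteq> states A"
  by (cases t) (force simp: is_rwta_def delta_set_def)

lemma finite_Delta: "is_rwta Sig ar A \<Longrightarrow> finite (Delta A t)"
  using Delta_subset_states finite_subset is_rwta_def by metis

theorem proposition3:
  fixes Sig :: "'f set" and ar :: "'f \<Rightarrow> nat"
    and A1 :: "('f, 'q1, 'k::{semiring_0, monoid_mult}) rwta"
    and A2 :: "('f, 'q2, 'k) rwta"
  assumes "is_rwta Sig ar A1" and "is_rwta Sig ar A2"
    and "wf_tree Sig ar t"
  shows "prob (rwta_prod A1 A2) t = prob A1 t * prob A2 t"
proof -
  have "prob (rwta_prod A1 A2) t = (\<Sum>(q1, q2) \<in> Delta A1 t \<times> Delta A2 t. nu A1 q1 * nu A2 q2)"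
    unfolding prob_def Delta_rwta_prod by (simp add: rwta_prod_def)
  also have "\<dots> = prob A1 t * prob A2 t"
    using finite_Delta[OF assms(1)] finite_Delta[OF assms(2)]
    by (simp add: prob_def sum_product sum.cartesian_product)
  finally show ?thesis .
qed

end
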